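(* For all $P,Q\in\Gamma_n$ ($n\ge2$), $$M_{SA}(P\|Q)\le \tfrac13 M_{SH}(P\|Q)\le \tfrac14\Delta(P\|Q)\le \tfrac12 M_{SG}(P\|Q)\le h(P\|Q),$$ and $$\xi_{SA}(P\|Q)\le \tfrac13\xi_{SH}(P\|Q)\le \tfrac14\xi_{\Delta}(P\|Q)\le \tfrac12\xi_{SG}(P\|Q)\le \xi_h(P\|Q).$$
   Context: $\Gamma_n=\{P=(p_1,\dots,p_n): p_i>0,\ \sum_i p_i=1\}$. For $f:(0,\infty)\to\mathbb{R}$, $C_f(P\|Q)=\sum_{i=1}^n q_i f(p_i/q_i)$; for differentiable $f$, $E_f(P\|Q)=\sum_{i=1}^n (p_i-q_i) f'(p_i/q_i)$ and $\xi_f(P\|Q)=E_f(P\|Q)-C_f(P\|Q)$. Define on $(0,\infty)$: $f_{SA}(x)=\sqrt{(x^2+1)/2}-\frac{x+1}{2}$, $f_{SG}(x)=\sqrt{(x^2+1)/2}-\sqrt{x}$, $f_{SH}(x)=\sqrt{(x^2+1)/2}-\frac{2x}{x+1}$, $f_h(x)=\frac12(\sqrt x-1)^2$, $f_\Delta(x)=\frac{(x-1)^2}{x+1}$. Then $M_{SA}=C_{f_{SA}}=\sum_i\sqrt{(p_i^2+q_i^2)/2}-1$, $M_{SG}=C_{f_{SG}}=\sum_i\big(\sqrt{(p_i^2+q_i^2)/2}-\sqrt{p_iq_i}\big)$, $M_{SH}=C_{f_{SH}}=\sum_i\big(\sqrt{(p_i^2+q_i^2)/2}-\frac{2p_iq_i}{p_i+q_i}\big)$,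 $h=C_{f_h}=\frac12\sum_i(\sqrt{p_i}-\sqrt{q_i})^2$, $\Delta=C_{f_\Delta}=\sum_i\frac{(p_i-q_i)^2}{p_i+q_i}$; and $\xi_{SA}=\xi_{f_{SA}}$, $\xi_{SG}=\xi_{f_{SG}}$, $\xi_{SH}=\xi_{f_{SH}}$, $\xi_h=\xi_{f_h}$, $\xi_\Delta=\xi_{f_\Delta}$. *)

theory Defs
  imports "HOL-Analysis.Analysis"
begin

definition Gamma :: "nat \<Rightarrow> (nat \<Rightarrow> real) set" where
  "Gamma n = {p. (\<forall>i<n. p i > 0) \<and> (\<Sum>i<n. p i) = 1}"

definition Cf :: "(real \<Rightarrow> real) \<Rightarrow> nat \<Rightarrow> (nat \<Rightarrow> real) \<Rightarrow> (nat \<Rightarrow> real) \<Rightarrow> real" where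
  "Cf f n p q = (\<Sum>i<n. q i * f (p i / q i))"

definition Ef :: "(real \<Rightarrow> real) \<Rightarrow> nat \<Rightarrow> (nat \<Rightarrow> real) \<Rightarrow> (nat \<Rightarrow> real) \<Rightarrow> real" where
  "Ef f n p q = (\<Sum>i<n. (p i - q i) * deriv f (p i / q i))"

definition xif :: "(real \<Rightarrow> real) \<Rightarrow> nat \<Rightarrow> (nat \<Rightarrow> real) \<Rightarrow> (nat \<Rightarrow> real) \<Rightarrow> real" where
  "xif f n p q = Ef f n p q - Cf f n p q"

definition f_SA :: "real \<Rightarrow> real" where
  "f_SA x = sqrt ((x^2 + 1) / 2) - (x + 1) / 2"
definition f_SG :: "real \<Rightarrow> real" where
  "f_SG x = sqrt ((x^2 + 1) / 2) - sqrt x"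
definition f_SH :: "real \<Rightarrow> real" where
  "f_SH x = sqrt ((x^2 + 1) / 2) - 2 * x / (x + 1)"
definition f_h :: "real \<Rightarrow> real" where
  "f_h x = (1/2) * (sqrt x - 1)^2"
definition f_Delta :: "real \<Rightarrow> real" where
  "f_Delta x = (x - 1)^2 / (x + 1)"

end

theory Submission
  imports Defs
begin

text \<open>Both \<open>C\<^sub>f\<close> and \<open>\<xi>\<^sub>f\<close> are \<open>q\<close>-weighted sums of a kernel evaluated at
  \<open>p\<^sub>i / q\<^sub>i\<close>: the generator \<open>f\<close> itself, resp. \<open>(x - 1) f'(x) - f(x)\<close>. So both chains
  follow from the corresponding chains of kernels on \<open>x > 0\<close>. Writing \<open>x = r\<^sup>2\<close> and
  \<open>w = sqrt ((r\<^sup>4 + 1) / 2)\<close>, each gap between consecutive kernels is a fraction with positive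
  denominator whose numerator is a nonnegative combination of three bounds on \<open>w\<close>, each proved
  by squaring: \<open>4 (r\<^sup>2 + 1) w \<le> 3 r\<^sup>4 + 2 r\<^sup>2 + 3\<close>,
  \<open>(r\<^sup>2 - 1)\<^sup>2 + 2 r (r\<^sup>2 + 1) \<le> 2 (r\<^sup>2 + 1) w\<close> and \<open>w \<le> r\<^sup>2 - r + 1\<close>.\<close>

definition xi_kernel :: "(real \<Rightarrow> real) \<Rightarrow> real \<Rightarrow> real" where
  "xi_kernel f x = (x - 1) * deriv f x - f x"

lemma Cf_mono:
  assumes "\<forall>i<n. p i > 0" and "\<forall>i<n. q i > 0"
    and "\<And>x. x > 0 \<Longrightarrow> f x \<le> g x"
  shows "Cf f n p q \<le> Cf g n p q"
  unfolding Cf_def using assms by (intro sum_mono mult_left_mono) auto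

lemma Cf_cmult: "Cf (\<lambda>x. c * f x) n p q = c * Cf f n p q"
  unfolding Cf_def by (simp add: sum_distrib_left algebra_simps)

lemma xif_eq_Cf_xi_kernel:
  assumes "\<forall>i<n. q i > 0"
  shows "xif f n p q = Cf (xi_kernel f) n p q"
  unfolding xif_def Ef_def Cf_def xi_kernel_def sum_subtractf[symmetric]
  using assms by (intro sum.cong) (auto simp: field_simps)

lemma DERIV_sqrt_mean_square:
  "((\<lambda>x. sqrt ((x^2 + 1) / 2)) has_real_derivative x / (2 * sqrt ((x^2 + 1) / 2))) (at x)"
proof -
  have "0 < (x^2 + 1) / 2"
    by (simp add: add_nonneg_pos)
  then show ?thesis
    by (auto intro!: derivative_eq_intros simp: field_simps)
qed

lemma deriv_f_SA: "deriv f_SA x = x / (2 * sqrt ((x^2 + 1) / 2)) - 1/2"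
  unfolding f_SA_def[abs_def]
  by (intro DERIV_imp_deriv DERIV_diff[OF DERIV_sqrt_mean_square])
    (auto intro!: derivative_eq_intros)

lemma deriv_f_SG:
  "x > 0 \<Longrightarrow> deriv f_SG x = x / (2 * sqrt ((x^2 + 1) / 2)) - 1 / (2 * sqrt x)"
  unfolding f_SG_def[abs_def]
  by (intro DERIV_imp_deriv DERIV_diff[OF DERIV_sqrt_mean_square])
    (auto intro!: derivative_eq_intros simp: field_simps)

lemma deriv_f_SH:
  "x > 0 \<Longrightarrow> deriv f_SH x = x / (2 * sqrt ((x^2 + 1) / 2)) - 2 / (x + 1)^2"
  unfolding f_SH_def[abs_def]
  by (intro DERIV_imp_deriv DERIV_diff[OF DERIV_sqrt_mean_square])
    (auto intro!: derivative_eq_intros simp: field_simps power2_eq_square)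

lemma deriv_f_h: "x > 0 \<Longrightarrow> deriv f_h x = (sqrt x - 1) / (2 * sqrt x)"
  unfolding f_h_def[abs_def]
  by (intro DERIV_imp_deriv) (auto intro!: derivative_eq_intros simp: field_simps)

lemma deriv_f_Delta: "x > 0 \<Longrightarrow> deriv f_Delta x = (x - 1) * (x + 3) / (x + 1)^2"
  unfolding f_Delta_def[abs_def]
  by (intro DERIV_imp_deriv)
    (auto intro!: derivative_eq_intros simp: field_simps power2_eq_square)

lemma le_of_square_gap:
  fixes a b d :: real
  assumes "0 \<le> b" and "b^2 - a^2 = d" and "0 \<le> d"
  shows "a \<le> b"
proof (rule power2_le_imp_le)
  show "a^2 \<le> b^2"
    using assms(2,3) by linarith
qed (rule assms(1))

context
  fixes r w :: real
  assumes r_pos: "r > 0" and w_def: "w = sqrt ((r^4 + 1) / 2)"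
begin

lemma w_pos: "w > 0"
proof -
  have "0 < r^4 + 1"
    by (simp add: add_nonneg_pos)
  then show ?thesis
    unfolding w_def by simp
qed

lemma w_squared: "2 * w^2 = r^4 + 1"
  using w_pos unfolding w_def by simp

lemma square_plus_one_pos: "r^2 + 1 > 0"
  by (simp add: add_nonneg_pos)

lemma w_le_rational_bound: "4 * (r^2 + 1) * w \<le> 3 * r^4 + 2 * r^2 + 3"
proof (rule le_of_square_gap)
  show "(3 * r^4 + 2 * r^2 + 3)^2 - (4 * (r^2 + 1) * w)^2 = (r^2 - 1)^4"
    using w_squared by algebra
qed simp_all

lemma w_ge_rational_bound: "(r^2 - 1)^2 + 2 * r * (r^2 + 1) \<le> 2 * (r^2 + 1) * w"
proof (rule le_of_square_gap)
  show "(2 * (r^2 + 1) * w)^2 - ((r^2 - 1)^2 + 2 * r * (r^2 + 1))^2 = (r - 1)^6 * (r + 1)^2"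
    using w_squared by algebra
qed (use w_pos in \<open>simp_all add: zero_le_even_power\<close>)

lemma w_le_quadratic_bound: "w \<le> r^2 - r + 1"
proof (rule le_of_square_gap)
  show "(r^2 - r + 1)^2 - w^2 = (r - 1)^4 / 2"
    using w_squared by algebra
  have "0 \<le> (r - 1/2)^2 + 3/4"
    by simp
  then show "0 \<le> r^2 - r + 1"
    by (simp add: power2_diff field_simps)
qed simp

lemma f_SA_square: "f_SA (r^2) = w - (r^2 + 1) / 2"
  by (simp add: f_SA_def w_def flip: power_mult)

lemma f_SG_square: "f_SG (r^2) = w - r"
  using r_pos by (simp add: f_SG_def w_def flip: power_mult)

lemma f_SH_square: "f_SH (r^2) = w - 2 * r^2 / (r^2 + 1)"
  by (simp add: f_SH_def w_def flip: power_mult)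

lemma f_h_square: "f_h (r^2) = (r - 1)^2 / 2"
  using r_pos by (simp add: f_h_def)

lemma xi_kernel_f_SA_square: "xi_kernel f_SA (r^2) = 1 - (r^2 + 1) / (2 * w)"
  using w_pos w_squared
  by (simp add: xi_kernel_def deriv_f_SA f_SA_square w_def [symmetric] flip: power_mult,
      simp add: divide_simps, algebra)

lemma xi_kernel_f_SG_square: "xi_kernel f_SG (r^2) = (r^2 + 1) / 2 * (1 / r - 1 / w)"
  using r_pos w_pos w_squared
  by (simp add: xi_kernel_def deriv_f_SG f_SG_square w_def [symmetric] flip: power_mult,
      simp add: divide_simps, algebra)

lemma xi_kernel_f_SH_square:
  "xi_kernel f_SH (r^2) = 2 * (r^4 + 1) / (r^2 + 1)^2 - (r^2 + 1) / (2 * w)"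
  using r_pos w_pos w_squared square_plus_one_pos
  by (simp add: xi_kernel_def deriv_f_SH f_SH_square w_def [symmetric] flip: power_mult,
      simp add: divide_simps, algebra)

lemma xi_kernel_f_h_square: "xi_kernel f_h (r^2) = (r - 1)^2 / (2 * r)"
  using r_pos
  by (simp add: xi_kernel_def deriv_f_h f_h_square, simp add: divide_simps, algebra)

lemma xi_kernel_f_Delta_square: "xi_kernel f_Delta (r^2) = 2 * (r^2 - 1)^2 / (r^2 + 1)^2"
  using r_pos square_plus_one_pos
  by (simp add: xi_kernel_def deriv_f_Delta f_Delta_def, simp add: divide_simps, algebra)

lemma f_SA_le_f_SH_square: "f_SA (r^2) \<le> 1/3 * f_SH (r^2)"
proof -
  have "1/3 * f_SH (r^2) - f_SA (r^2)
      = (3 * r^4 + 2 * r^2 + 3 - 4 * (r^2 + 1) * w) / (6 * (r^2 + 1))"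
    using square_plus_one_pos by (simp add: f_SA_square f_SH_square divide_simps) algebra
  moreover have "0 \<le> \<dots>"
    using w_le_rational_bound square_plus_one_pos by simp
  ultimately show ?thesis
    by linarith
qed

lemma f_SH_le_f_Delta_square: "1/3 * f_SH (r^2) \<le> 1/4 * f_Delta (r^2)"
proof -
  have "1/4 * f_Delta (r^2) - 1/3 * f_SH (r^2)
      = (3 * r^4 + 2 * r^2 + 3 - 4 * (r^2 + 1) * w) / (12 * (r^2 + 1))"
    using square_plus_one_pos by (simp add: f_SH_square f_Delta_def divide_simps) algebra
  moreover have "0 \<le> \<dots>"
    using w_le_rational_bound square_plus_one_pos by simp
  ultimately show ?thesis
    by linarith
qed

lemma f_Delta_le_f_SG_square: "1/4 * f_Delta (r^2) \<le> 1/2 * f_SG (r^2)"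
proof -
  have "1/2 * f_SG (r^2) - 1/4 * f_Delta (r^2)
      = (2 * (r^2 + 1) * w - (r^2 - 1)^2 - 2 * r * (r^2 + 1)) / (4 * (r^2 + 1))"
    using square_plus_one_pos by (simp add: f_SG_square f_Delta_def divide_simps) algebra
  moreover have "0 \<le> \<dots>"
    using w_ge_rational_bound square_plus_one_pos by simp
  ultimately show ?thesis
    by linarith
qed

lemma f_SG_le_f_h_square: "1/2 * f_SG (r^2) \<le> f_h (r^2)"
  using w_le_quadratic_bound by (simp add: f_SG_square f_h_square power2_diff)

lemma xi_kernel_f_SA_le_f_SH_square: "xi_kernel f_SA (r^2) \<le> 1/3 * xi_kernel f_SH (r^2)"
proof -
  have "1/3 * xi_kernel f_SH (r^2) - xi_kernel f_SA (r^2)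
      = ((r^2 - 1)^4 + (r^4 + 6 * r^2 + 1) * (3 * r^4 + 2 * r^2 + 3 - 4 * (r^2 + 1) * w))
        / (12 * w * (r^2 + 1)^3)"
    using w_pos square_plus_one_pos
    by (simp add: xi_kernel_f_SA_square xi_kernel_f_SH_square divide_simps) algebra
  moreover have "0 \<le> \<dots>"
    using w_le_rational_bound w_pos square_plus_one_pos by simp
  ultimately show ?thesis
    by linarith
qed

lemma xi_kernel_f_SH_le_f_Delta_square:
  "1/3 * xi_kernel f_SH (r^2) \<le> 1/4 * xi_kernel f_Delta (r^2)"
proof -
  have "1/4 * xi_kernel f_Delta (r^2) - 1/3 * xi_kernel f_SH (r^2)
      = ((r^2 - 1)^4 + (r^4 + 6 * r^2 + 1) * (3 * r^4 + 2 * r^2 + 3 - 4 * (r^2 + 1) * w))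
        / (24 * w * (r^2 + 1)^3)"
    using w_pos square_plus_one_pos
    by (simp add: xi_kernel_f_SH_square xi_kernel_f_Delta_square divide_simps) algebra
  moreover have "0 \<le> \<dots>"
    using w_le_rational_bound w_pos square_plus_one_pos by simp
  ultimately show ?thesis
    by linarith
qed

lemma xi_kernel_f_Delta_le_f_SG_square:
  "1/4 * xi_kernel f_Delta (r^2) \<le> 1/2 * xi_kernel f_SG (r^2)"
proof -
  have "1/2 * xi_kernel f_SG (r^2) - 1/4 * xi_kernel f_Delta (r^2)
      = ((2 * (r^2 + 1) * w - (r^2 - 1)^2 - 2 * r * (r^2 + 1))
            * ((r^2 - 1)^2 * (r - 1)^2 + 4 * r^2 * (r^2 + 1))
         + (r^2 - 1)^4 * (r - 1)^2)
        / (8 * r * w * (r^2 + 1)^3)"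
    using r_pos w_pos square_plus_one_pos
    by (simp add: xi_kernel_f_SG_square xi_kernel_f_Delta_square divide_simps) algebra
  moreover have "0 \<le> \<dots>"
    using w_ge_rational_bound r_pos w_pos square_plus_one_pos by simp
  ultimately show ?thesis
    by linarith
qed

lemma xi_kernel_f_SG_le_f_h_square: "1/2 * xi_kernel f_SG (r^2) \<le> xi_kernel f_h (r^2)"
proof -
  define c where "c = 4 * r - r^2 - 1"
  have "xi_kernel f_h (r^2) - 1/2 * xi_kernel f_SG (r^2)
      = (r * (r^2 + 1) - w * c) / (4 * r * w)"
    using r_pos w_pos square_plus_one_pos unfolding c_def
    by (simp add: xi_kernel_f_h_square xi_kernel_f_SG_square divide_simps) algebra
  moreover have "w * c \<le> r * (r^2 + 1)"
  proof (cases "c \<ge> 0")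
    case True
    have "r * (r^2 + 1) - w * c = (r - 1)^4 + (r^2 - r + 1 - w) * c"
      unfolding c_def by algebra
    moreover have "0 \<le> (r^2 - r + 1 - w) * c"
      using True w_le_quadratic_bound by simp
    moreover have "0 \<le> (r - 1)^4"
      by simp
    ultimately show ?thesis
      by linarith
  next
    case False
    then have "w * c < 0"
      using w_pos by (simp add: mult_pos_neg)
    moreover have "0 < r * (r^2 + 1)"
      using r_pos square_plus_one_pos by simp
    ultimately show ?thesis
      by linarith
  qed
  then have "0 \<le> (r * (r^2 + 1) - w * c) / (4 * r * w)"
    using r_pos w_pos by simp
  ultimately show ?thesis
    by linarith
qed

end

lemma generator_chain:
  fixes x :: real
  assumes "x > 0"
  shows "f_SA x \<le> 1/3 * f_SH x"
    and "1/3 * f_SH x \<le> 1/4 * f_Delta x"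
    and "1/4 * f_Delta x \<le> 1/2 * f_SG x"
    and "1/2 * f_SG x \<le> f_h x"
proof -
  have r: "sqrt x > 0" and x: "(sqrt x)^2 = x"
    using assms by simp_all
  show "f_SA x \<le> 1/3 * f_SH x"
    using f_SA_le_f_SH_square[OF r refl] unfolding x .
  show "1/3 * f_SH x \<le> 1/4 * f_Delta x"
    using f_SH_le_f_Delta_square[OF r refl] unfolding x .
  show "1/4 * f_Delta x \<le> 1/2 * f_SG x"
    using f_Delta_le_f_SG_square[OF r refl] unfolding x .
  show "1/2 * f_SG x \<le> f_h x"
    using f_SG_le_f_h_square[OF r refl] unfolding x .
qed

lemma xi_kernel_chain:
  fixes x :: real
  assumes "x > 0"
  shows "xi_kernel f_SA x \<le> 1/3 * xi_kernel f_SH x"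
    and "1/3 * xi_kernel f_SH x \<le> 1/4 * xi_kernel f_Delta x"
    and "1/4 * xi_kernel f_Delta x \<le> 1/2 * xi_kernel f_SG x"
    and "1/2 * xi_kernel f_SG x \<le> xi_kernel f_h x"
proof -
  have r: "sqrt x > 0" and x: "(sqrt x)^2 = x"
    using assms by simp_all
  show "xi_kernel f_SA x \<le> 1/3 * xi_kernel f_SH x"
    using xi_kernel_f_SA_le_f_SH_square[OF r refl] unfolding x .
  show "1/3 * xi_kernel f_SH x \<le> 1/4 * xi_kernel f_Delta x"
    using xi_kernel_f_SH_le_f_Delta_square[OF r refl] unfolding x .
  show "1/4 * xi_kernel f_Delta x \<le> 1/2 * xi_kernel f_SG x"
    using xi_kernel_f_Delta_le_f_SG_square[OF r refl] unfolding x .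
  show "1/2 * xi_kernel f_SG x \<le> xi_kernel f_h x"
    using xi_kernel_f_SG_le_f_h_square[OF r refl] unfolding x .
qed

theorem theorem5p1:
  fixes n :: nat and p q :: "nat \<Rightarrow> real"
  assumes "n \<ge> 2" and "p \<in> Gamma n" and "q \<in> Gamma n"
  shows "Cf f_SA n p q \<le> (1/3) * Cf f_SH n p q
       \<and> (1/3) * Cf f_SH n p q \<le> (1/4) * Cf f_Delta n p q
       \<and> (1/4) * Cf f_Delta n p q \<le> (1/2) * Cf f_SG n p q
       \<and> (1/2) * Cf f_SG n p q \<le> Cf f_h n p q
       \<and> xif f_SA n p q \<le> (1/3) * xif f_SH n p q
       \<and> (1/3) * xif f_SH n p q \<le> (1/4) * xif f_Delta n p q
       \<and> (1/4) * xif f_Delta n p q \<le> (1/2) * xif f_SG n p q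
       \<and> (1/2) * xif f_SG n p q \<le> xif f_h n p q"
proof -
  \<comment> \<open>Only positivity of the entries is used, not \<open>n \<ge> 2\<close> or the normalisation.\<close>
  have p: "\<forall>i<n. p i > 0" and q: "\<forall>i<n. q i > 0"
    using assms(2,3) unfolding Gamma_def by auto
  show ?thesis
    unfolding xif_eq_Cf_xi_kernel[OF q] Cf_cmult [symmetric]
    by (intro conjI Cf_mono[OF p q] generator_chain xi_kernel_chain)
qed

end
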